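(* Let $\mathbf{N}_1,\dots,\mathbf{N}_L$ be nonsingular $D\times D$ integer matrices that are pairwise commutative and coprime, i.e. $\mathbf{N}_i\mathbf{N}_j=\mathbf{N}_j\mathbf{N}_i$ and $\mathbf{N}_i,\mathbf{N}_j$ are coprime for all $i\ne j$. Then for any subset $\{i_1,\dots,i_p\}\subset\{1,\dots,L\}$ and any subset $\{j_1,\dots,j_q\}\subset\{1,\dots,L\}\setminus\{i_1,\dots,i_p\}$, the matrices $\mathbf{N}_{i_1}\cdots\mathbf{N}_{i_p}$ and $\mathbf{N}_{j_1}\cdots\mathbf{N}_{j_q}$ are commutative and coprime. Moreover, for any subset $\{i_1,\dots,i_p\}$ with $p\ge 2$, $\mathbf{N}_{i_1}\cdots\mathbf{N}_{i_p}$ is an lcm (i.e. simultaneously an lcrm and an lclm) of $\mathbf{N}_{i_1},\dots,\mathbf{N}_{i_p}$.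
   Context: All matrices are $D\times D$ integer matrices. Two integer matrices are left (resp. right) coprime if every common left (resp. right) divisor is unimodular (integer with determinant $\pm1$); $\mathbf{A}$ is a left divisor of $\mathbf{M}$ if $\mathbf{A}^{-1}\mathbf{M}$ is an integer matrix, a right divisor if $\mathbf{M}\mathbf{A}^{-1}$ is. For commuting nonsingular integer matrices, left and right coprimeness are equivalent and are simply called "coprime". Crm/lcrm: a nonsingular integer $\mathbf{C}$ with $\mathbf{C}=\mathbf{M}_i\mathbf{P}_i$ ($\mathbf{P}_i$ integer) for all $i$ is a crm; an lcrm is a crm $\mathbf{R}$ such that every crm equals $\mathbf{R}\mathbf{A}$ for an integer $\mathbf{A}$; clm/lclm are defined symmetrically with left multiplication. An "lcm" means a matrix that is both an lcrm and an lclm. *)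

theory Defs
  imports "HOL-Analysis.Analysis"
begin

(* D x D integer matrices are modelled as int^'n^'n, with D = CARD('n). *)

definition nonsingular :: "int^'n^'n \<Rightarrow> bool" where
  "nonsingular M \<longleftrightarrow> det M \<noteq> 0"

definition unimodular :: "int^'n^'n \<Rightarrow> bool" where
  "unimodular U \<longleftrightarrow> det U = 1 \<or> det U = -1"

(* A is a left divisor of M: A^{-1} M is an integer matrix, i.e. M = A X with X integer *)
definition left_divisor :: "int^'n^'n \<Rightarrow> int^'n^'n \<Rightarrow> bool" where
  "left_divisor A M \<longleftrightarrow> nonsingular A \<and> (\<exists>X::int^'n^'n. M = A ** X)"

(* A is a right divisor of M: M A^{-1} is an integer matrix, i.e. M = X A with X integer *)
definition right_divisor :: "int^'n^'n \<Rightarrow> int^'n^'n \<Rightarrow> bool" where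
  "right_divisor A M \<longleftrightarrow> nonsingular A \<and> (\<exists>X::int^'n^'n. M = X ** A)"

definition left_coprime :: "int^'n^'n \<Rightarrow> int^'n^'n \<Rightarrow> bool" where
  "left_coprime M1 M2 \<longleftrightarrow>
     (\<forall>A. left_divisor A M1 \<and> left_divisor A M2 \<longrightarrow> unimodular A)"

definition right_coprime :: "int^'n^'n \<Rightarrow> int^'n^'n \<Rightarrow> bool" where
  "right_coprime M1 M2 \<longleftrightarrow>
     (\<forall>A. right_divisor A M1 \<and> right_divisor A M2 \<longrightarrow> unimodular A)"

(* "coprime" for commuting nonsingular matrices: left and right coprime (equivalent there) *)
definition mat_coprime :: "int^'n^'n \<Rightarrow> int^'n^'n \<Rightarrow> bool" where
  "mat_coprime M1 M2 \<longleftrightarrow> left_coprime M1 M2 \<and> right_coprime M1 M2"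

definition is_crm :: "('i \<Rightarrow> int^'n^'n) \<Rightarrow> 'i set \<Rightarrow> int^'n^'n \<Rightarrow> bool" where
  "is_crm M I C \<longleftrightarrow> nonsingular C \<and> (\<forall>i\<in>I. \<exists>P::int^'n^'n. C = M i ** P)"

definition is_lcrm :: "('i \<Rightarrow> int^'n^'n) \<Rightarrow> 'i set \<Rightarrow> int^'n^'n \<Rightarrow> bool" where
  "is_lcrm M I R \<longleftrightarrow> is_crm M I R \<and>
     (\<forall>C. is_crm M I C \<longrightarrow> (\<exists>A::int^'n^'n. C = R ** A))"

definition is_clm :: "('i \<Rightarrow> int^'n^'n) \<Rightarrow> 'i set \<Rightarrow> int^'n^'n \<Rightarrow> bool" where
  "is_clm M I C \<longleftrightarrow> nonsingular C \<and> (\<forall>i\<in>I. \<exists>P::int^'n^'n. C = P ** M i)"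

definition is_lclm :: "('i \<Rightarrow> int^'n^'n) \<Rightarrow> 'i set \<Rightarrow> int^'n^'n \<Rightarrow> bool" where
  "is_lclm M I R \<longleftrightarrow> is_clm M I R \<and>
     (\<forall>C. is_clm M I C \<longrightarrow> (\<exists>A::int^'n^'n. C = A ** R))"

definition is_lcm :: "('i \<Rightarrow> int^'n^'n) \<Rightarrow> 'i set \<Rightarrow> int^'n^'n \<Rightarrow> bool" where
  "is_lcm M I R \<longleftrightarrow> is_lcrm M I R \<and> is_lclm M I R"

definition mat_prod_list :: "(nat \<Rightarrow> int^'n^'n) \<Rightarrow> nat list \<Rightarrow> int^'n^'n" where
  "mat_prod_list N is = foldr (\<lambda>i P. N i ** P) is (mat 1)"

end

theory Submission
  imports Defs
begin

(* The lattice spanned by the columns of a nonsingular integer matrix M1 and of M2 is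
   generated by a single matrix G = M1 X + M2 Y: choose one with |det G| minimal; if some
   lattice vector v were not in the column lattice of G, Cramer's rule would show that
   replacing a column of G by the remainder of v modulo G gives a lattice generator of
   smaller nonzero determinant.  G is then a common left divisor of M1 and M2, so left
   coprimeness makes it unimodular and turns it into a Bezout identity M1 X' + M2 Y' = I;
   transposition handles the right-hand side.  Bezout identities are preserved under
   multiplication by commuting factors, which gives coprimeness of products over disjoint
   index sets.  Finally, if X N1 + Y N2 = I and N1 N2 = N2 N1, every common right multiple
   C = N1 P = N2 Q equals N1 N2 (X Q + Y P), so by induction the product of the family
   divides every common right (and symmetrically left) multiple. *)

lemma matrix_add_rdistrib: "(B + C) ** A = B ** A + C ** A"
  by (vector matrix_matrix_mult_def sum.distrib[symmetric] field_simps)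

lemma transpose_add: "transpose (A + B) = transpose A + transpose B"
  by (simp add: transpose_def vec_eq_iff)

lemma matrix_vector_mult_smult:
  fixes A :: "'a::comm_semiring_1^'n^'m"
  shows "A *v (c *s x) = c *s (A *v x)"
  by (simp add: matrix_vector_mult_def vec_eq_iff sum_distrib_left mult_ac)

lemma matrix_mult_eq_columnwise:
  assumes "\<And>j. A *v column j Z = column j B"
  shows "A ** Z = B"
  using assms by (simp add: vec_eq_iff matrix_matrix_mult_def matrix_vector_mult_def column_def)

lemma exists_right_factor:
  assumes "\<And>x. \<exists>z. A *v x = G *v z"
  shows "\<exists>Z. A = G ** Z"
proof -
  obtain f where f: "\<And>x. A *v x = G *v f x" using assms by metis
  define Z where "Z = (\<chi> i j. f (axis j 1) $ i)"
  have "A *v axis j 1 = column j A" for j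
    by (simp add: matrix_vector_mult_def column_def axis_def vec_eq_iff if_distrib cong: if_cong)
  then have "G ** Z = A"
    by (intro matrix_mult_eq_columnwise) (simp add: Z_def column_def f[symmetric])
  then show ?thesis by metis
qed

section \<open>Cramer's rule for integer matrices\<close>

lemma map_matrix_of_int_mult:
  "(map_matrix of_int (A ** B) :: 'a::ring_1^_^_) = map_matrix of_int A ** map_matrix of_int B"
  by (simp add: matrix_matrix_mult_def vec_eq_iff)

lemma map_matrix_of_int_add:
  "(map_matrix of_int (A + B) :: 'a::ring_1^_^_) = map_matrix of_int A + map_matrix of_int B"
  by (simp add: vec_eq_iff)

lemma map_matrix_of_int_mat: "(map_matrix of_int (mat 1) :: 'a::ring_1^'n^'n) = mat 1"
  by (simp add: mat_def vec_eq_iff)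

lemma map_matrix_of_int_eq_iff:
  "(map_matrix of_int A :: 'a::ring_char_0^_^_) = map_matrix of_int B \<longleftrightarrow> A = B"
  by (simp add: vec_eq_iff)

lemma det_map_matrix_of_int:
  "(det (map_matrix of_int A) :: 'a::comm_ring_1) = of_int (det A)"
  by (simp add: det_def of_int_sum of_int_mult of_int_prod)

lemma map_matrix_of_int_vector_mult:
  "(map_matrix of_int A :: 'a::ring_1^_^_) *v (\<chi> i. of_int (u $ i)) = (\<chi> i. of_int ((A *v u) $ i))"
  by (simp add: matrix_vector_mult_def vec_eq_iff)

definition replace_column :: "'a^'n^'m \<Rightarrow> 'n \<Rightarrow> 'a^'m \<Rightarrow> 'a^'n^'m" where
  "replace_column A k v = (\<chi> i j. if j = k then v $ i else A $ i $ j)"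

definition cramer_numerators :: "int^'n^'n \<Rightarrow> int^'n \<Rightarrow> int^'n" where
  "cramer_numerators G v = (\<chi> k. det (replace_column G k v))"

lemma map_matrix_of_int_replace_column:
  "(map_matrix of_int (replace_column A k v) :: 'a::ring_1^_^_) =
     replace_column (map_matrix of_int A) k (\<chi> i. of_int (v $ i))"
  by (simp add: replace_column_def vec_eq_iff)

lemma mult_replace_column: "A ** replace_column X k u = replace_column (A ** X) k (A *v u)"
  by (simp add: replace_column_def matrix_matrix_mult_def matrix_vector_mult_def vec_eq_iff)

lemma add_replace_column:
  "replace_column A k u + replace_column B k v = replace_column (A + B) k (u + v)"
  by (simp add: replace_column_def vec_eq_iff)

lemma det_replace_column_scaled:
  fixes G :: "int^'n^'n"
  assumes "G *v u = c *s v" "c \<noteq> 0"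
  shows "c * det (replace_column G k v) = u $ k * det G"
proof -
  let ?G = "map_matrix real_of_int G"
  define x where "x = (\<chi> i. real_of_int (u $ i) / real_of_int c)"
  have "(G *v u) $ i = c * v $ i" for i
    using assms(1) by simp
  then have Gx: "?G *v x = (\<chi> i. real_of_int (v $ i))"
    using assms(2) by (simp add: x_def matrix_vector_mult_def vec_eq_iff sum_divide_distrib[symmetric]
        flip: of_int_sum of_int_mult)
      (simp add: of_int_mult)
  have "det (replace_column ?G k (?G *v x)) = x $ k * det ?G"
    unfolding replace_column_def by (rule cramer_lemma)
  then have "real_of_int (det (replace_column G k v)) =
      real_of_int (u $ k) / real_of_int c * real_of_int (det G)"
    unfolding Gx
    by (simp add: map_matrix_of_int_replace_column[symmetric] det_map_matrix_of_int x_def)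
  then show ?thesis
    using assms(2) by (simp add: field_simps flip: of_int_mult of_int_eq_iff)
qed

lemma matrix_vector_mult_cramer_numerators:
  fixes G :: "int^'n^'n"
  assumes "det G \<noteq> 0"
  shows "G *v cramer_numerators G v = det G *s v"
proof -
  let ?G = "map_matrix real_of_int G" and ?v = "\<chi> i. real_of_int (v $ i)"
  have "det ?G \<noteq> 0"
    using assms by (simp add: det_map_matrix_of_int)
  then have "?G *v (\<chi> k. det (replace_column ?G k ?v) / det ?G) = ?v"
    using cramer[of ?G _ ?v] by (simp add: replace_column_def)
  moreover have "(\<chi> k. det (replace_column ?G k ?v) / det ?G) =
      inverse (real_of_int (det G)) *s (\<chi> k. real_of_int (cramer_numerators G v $ k))"
    by (simp add: cramer_numerators_def det_map_matrix_of_int vec_eq_iff field_simps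
        flip: map_matrix_of_int_replace_column)
  ultimately have "?G *v (\<chi> k. real_of_int (cramer_numerators G v $ k)) = real_of_int (det G) *s ?v"
    using assms by (simp add: vector_scalar_commute vec_eq_iff field_simps)
  then show ?thesis
    by (simp add: map_matrix_of_int_vector_mult vec_eq_iff flip: of_int_mult)
qed

lemma unimodular_right_inverse:
  fixes G :: "int^'n^'n"
  assumes "unimodular G"
  shows "\<exists>W. G ** W = mat 1"
proof -
  have d: "det G * det G = 1" "det G \<noteq> 0"
    using assms unfolding unimodular_def by auto
  have "mat 1 *v x = G *v (det G *s cramer_numerators G x)" for x
    using d by (simp add: matrix_vector_mult_smult matrix_vector_mult_cramer_numerators vector_smult_assoc)
  then have "\<exists>W. mat 1 = G ** W"
    by (intro exists_right_factor) blast
  then show ?thesis by metis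
qed

section \<open>A generator of the lattice spanned by two matrices\<close>

lemma lattice_generator_descent:
  fixes M1 M2 G X Y :: "int^'n^'n" and x y :: "int^'n"
  assumes G: "det G \<noteq> 0" "G = M1 ** X + M2 ** Y"
    and outside: "\<nexists>z. M1 *v x + M2 *v y = G *v z"
  obtains X' Y' where "det (M1 ** X' + M2 ** Y') \<noteq> 0"
    and "\<bar>det (M1 ** X' + M2 ** Y')\<bar> < \<bar>det G\<bar>"
proof -
  define v where "v = M1 *v x + M2 *v y"
  define d where "d = det G"
  define w where "w = cramer_numerators G v"
  define q where "q = (\<chi> k. w $ k div d)"
  define r where "r = (\<chi> k. w $ k mod d)"
  have "w = d *s q + r"
    by (simp add: q_def r_def vec_eq_iff)
  moreover have "G *v w = d *s v"
    using G(1) by (simp add: w_def d_def matrix_vector_mult_cramer_numerators)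
  ultimately have Gr: "G *v r = d *s (v - G *v q)"
    by (simp add: matrix_vector_right_distrib matrix_vector_mult_smult vector_ssub_ldistrib
        algebra_simps)
  obtain k where rk: "r $ k \<noteq> 0"
  proof (cases "r = 0")
    case True
    then have "d *s (v - G *v q) = 0"
      using Gr by simp
    then have "v = G *v q"
      using G(1) by (simp add: d_def vec_eq_iff)
    then show ?thesis
      using outside v_def by metis
  qed (auto simp: vec_eq_iff)
  have "d * det (replace_column G k (v - G *v q)) = r $ k * d"
    using det_replace_column_scaled[OF Gr] G(1) d_def by simp
  then have det_eq: "det (replace_column G k (v - G *v q)) = r $ k"
    using G(1) d_def by simp
  have "\<bar>r $ k\<bar> < \<bar>d\<bar>"
    using G(1) by (simp add: r_def d_def abs_mod_less)
  moreover have "replace_column G k (v - G *v q) =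
      M1 ** replace_column X k (x - X *v q) + M2 ** replace_column Y k (y - Y *v q)"
    by (simp add: mult_replace_column add_replace_column G(2) v_def matrix_vector_mul_assoc
        algebra_simps)
  ultimately show ?thesis
    using that det_eq rk d_def by metis
qed

lemma left_lattice_generator:
  fixes M1 M2 :: "int^'n^'n"
  assumes "det M1 \<noteq> 0"
  obtains X Y where "det (M1 ** X + M2 ** Y) \<noteq> 0"
    and "\<And>x y. \<exists>z. M1 *v x + M2 *v y = (M1 ** X + M2 ** Y) *v z"
proof -
  let ?G = "\<lambda>(X, Y). M1 ** X + M2 ** Y"
  have "det (?G (mat 1, 0)) \<noteq> 0"
    using assms by simp
  then obtain XY where XY: "det (?G XY) \<noteq> 0"
    and least: "\<And>XY'. det (?G XY') \<noteq> 0 \<Longrightarrow> nat \<bar>det (?G XY)\<bar> \<le> nat \<bar>det (?G XY')\<bar>"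
    using ex_has_least_nat[where P = "\<lambda>XY. det (?G XY) \<noteq> 0" and m = "\<lambda>XY. nat \<bar>det (?G XY)\<bar>"]
    by blast
  obtain X Y where [simp]: "XY = (X, Y)"
    by fastforce
  have "\<exists>z. M1 *v x + M2 *v y = ?G XY *v z" for x y
  proof (rule ccontr)
    assume "\<nexists>z. M1 *v x + M2 *v y = ?G XY *v z"
    then obtain X' Y' where "det (?G (X', Y')) \<noteq> 0" "\<bar>det (?G (X', Y'))\<bar> < \<bar>det (?G XY)\<bar>"
      using lattice_generator_descent[of "?G XY" M1 X M2 Y x y] XY by auto
    then show False
      using least[of "(X', Y')"] by linarith
  qed
  then show ?thesis
    using that XY by simp
qed

section \<open>Bezout identities and coprimeness\<close>

definition left_bezout :: "'a::comm_ring_1^'n^'n \<Rightarrow> 'a^'n^'n \<Rightarrow> bool" where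
  "left_bezout A B \<longleftrightarrow> (\<exists>X Y. A ** X + B ** Y = mat 1)"

definition right_bezout :: "'a::comm_ring_1^'n^'n \<Rightarrow> 'a^'n^'n \<Rightarrow> bool" where
  "right_bezout A B \<longleftrightarrow> (\<exists>X Y. X ** A + Y ** B = mat 1)"

lemma right_bezout_iff_left_bezout_transpose:
  "right_bezout A B \<longleftrightarrow> left_bezout (transpose A) (transpose B)"
proof
  assume "right_bezout A B"
  then obtain X Y where "X ** A + Y ** B = mat 1"
    unfolding right_bezout_def by blast
  then have "transpose (X ** A + Y ** B) = mat 1"
    by simp
  then have "transpose A ** transpose X + transpose B ** transpose Y = mat 1"
    by (simp add: transpose_add matrix_transpose_mul)
  then show "left_bezout (transpose A) (transpose B)"
    unfolding left_bezout_def by blast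
next
  assume "left_bezout (transpose A) (transpose B)"
  then obtain X Y where "transpose A ** X + transpose B ** Y = mat 1"
    unfolding left_bezout_def by blast
  then have "transpose (transpose A ** X + transpose B ** Y) = mat 1"
    by simp
  then have "transpose X ** A + transpose Y ** B = mat 1"
    by (simp add: transpose_add matrix_transpose_mul)
  then show "right_bezout A B"
    unfolding right_bezout_def by blast
qed

lemma left_bezout_sym: "left_bezout A B \<Longrightarrow> left_bezout B A"
  unfolding left_bezout_def by (metis add.commute)

lemma right_bezout_sym: "right_bezout A B \<Longrightarrow> right_bezout B A"
  unfolding right_bezout_def by (metis add.commute)

lemma left_bezout_one: "left_bezout A (mat 1)"
  unfolding left_bezout_def by (rule exI[of _ 0], rule exI[of _ "mat 1"]) simp

lemma right_bezout_one: "right_bezout A (mat 1)"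
  unfolding right_bezout_def by (rule exI[of _ 0], rule exI[of _ "mat 1"]) simp

lemma left_bezout_mult:
  assumes "left_bezout A B" "left_bezout A C" "A ** B = B ** A"
  shows "left_bezout A (B ** C)"
proof -
  obtain X1 Y1 where 1: "A ** X1 + B ** Y1 = mat 1"
    using assms(1) left_bezout_def by blast
  obtain X2 Y2 where 2: "A ** X2 + C ** Y2 = mat 1"
    using assms(2) left_bezout_def by blast
  have "B ** Y1 = B ** (A ** X2 + C ** Y2) ** Y1"
    using 2 by simp
  also have "\<dots> = A ** (B ** X2 ** Y1) + (B ** C) ** (Y2 ** Y1)"
    by (simp add: matrix_add_ldistrib matrix_add_rdistrib matrix_mul_assoc assms(3))
  finally have "A ** (X1 + B ** X2 ** Y1) + (B ** C) ** (Y2 ** Y1) = mat 1"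
    using 1 by (simp add: matrix_add_ldistrib add.assoc)
  then show ?thesis
    unfolding left_bezout_def by blast
qed

lemma right_bezout_mult:
  assumes "right_bezout A B" "right_bezout A C" "A ** C = C ** A"
  shows "right_bezout A (B ** C)"
proof -
  have "transpose A ** transpose C = transpose C ** transpose A"
    by (metis assms(3) matrix_transpose_mul)
  then show ?thesis
    using left_bezout_mult[of "transpose A" "transpose C" "transpose B"] assms
    by (simp add: right_bezout_iff_left_bezout_transpose matrix_transpose_mul)
qed

lemma left_coprime_imp_left_bezout:
  assumes "nonsingular M1" "left_coprime M1 M2"
  shows "left_bezout M1 M2"
proof -
  obtain X Y where G: "det (M1 ** X + M2 ** Y) \<noteq> 0"
    and span: "\<And>x y. \<exists>z. M1 *v x + M2 *v y = (M1 ** X + M2 ** Y) *v z"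
    using left_lattice_generator assms(1) unfolding nonsingular_def by blast
  let ?G = "M1 ** X + M2 ** Y"
  have "\<exists>Z. M1 = ?G ** Z" "\<exists>Z. M2 = ?G ** Z"
    using span[of _ 0] span[of 0] by (auto intro: exists_right_factor)
  then have "unimodular ?G"
    using assms(2) G unfolding left_coprime_def left_divisor_def nonsingular_def by blast
  then obtain W where "?G ** W = mat 1"
    using unimodular_right_inverse by blast
  then have "M1 ** (X ** W) + M2 ** (Y ** W) = mat 1"
    by (simp add: matrix_mul_assoc matrix_add_rdistrib)
  then show ?thesis
    unfolding left_bezout_def by blast
qed

lemma left_bezout_imp_left_coprime:
  assumes "left_bezout M1 M2"
  shows "left_coprime M1 M2"
  unfolding left_coprime_def
proof (intro allI impI)
  fix A
  assume "left_divisor A M1 \<and> left_divisor A M2"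
  then obtain P Q where "M1 = A ** P" "M2 = A ** Q"
    unfolding left_divisor_def by blast
  moreover obtain X Y where "M1 ** X + M2 ** Y = mat 1"
    using assms unfolding left_bezout_def by blast
  ultimately have "A ** (P ** X + Q ** Y) = mat 1"
    by (simp add: matrix_add_ldistrib matrix_mul_assoc)
  then have "det A * det (P ** X + Q ** Y) = 1"
    by (metis det_mul det_I)
  then show "unimodular A"
    unfolding unimodular_def using zmult_eq_1_iff by blast
qed

lemma left_coprime_iff_left_bezout:
  "nonsingular M1 \<Longrightarrow> left_coprime M1 M2 \<longleftrightarrow> left_bezout M1 M2"
  using left_coprime_imp_left_bezout left_bezout_imp_left_coprime by blast

lemma right_divisor_iff_left_divisor_transpose:
  "right_divisor A M \<longleftrightarrow> left_divisor (transpose A) (transpose M)"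
  unfolding right_divisor_def left_divisor_def nonsingular_def
  by (metis det_transpose matrix_transpose_mul transpose_transpose)

lemma right_coprime_iff_left_coprime_transpose:
  "right_coprime M1 M2 \<longleftrightarrow> left_coprime (transpose M1) (transpose M2)"
  unfolding right_coprime_def left_coprime_def right_divisor_iff_left_divisor_transpose
  by (metis det_transpose transpose_transpose unimodular_def)

lemma right_coprime_iff_right_bezout:
  "nonsingular M1 \<Longrightarrow> right_coprime M1 M2 \<longleftrightarrow> right_bezout M1 M2"
  by (simp add: right_coprime_iff_left_coprime_transpose right_bezout_iff_left_bezout_transpose
      left_coprime_iff_left_bezout nonsingular_def)

lemma mat_coprime_iff_bezout:
  "nonsingular M1 \<Longrightarrow> mat_coprime M1 M2 \<longleftrightarrow> left_bezout M1 M2 \<and> right_bezout M1 M2"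
  by (simp add: mat_coprime_def left_coprime_iff_left_bezout right_coprime_iff_right_bezout)

section \<open>Common multiples\<close>

lemma invertible_common_right_multiple:
  fixes a b x y :: "'a::comm_ring_1^'n^'n" and c p q :: "'a^'m^'n"
  assumes "invertible a" "invertible b" "a ** b = b ** a" "x ** a + y ** b = mat 1"
    and "c = a ** p" "c = b ** q"
  shows "c = a ** b ** (x ** q + y ** p)"
proof -
  obtain ia where ia: "a ** ia = mat 1" "ia ** a = mat 1"
    using assms(1) unfolding invertible_def by blast
  obtain ib where ib: "b ** ib = mat 1" "ib ** b = mat 1"
    using assms(2) unfolding invertible_def by blast
  have p: "p = ia ** c"
    by (metis assms(5) ia(2) matrix_mul_assoc matrix_mul_lid)
  have q: "q = ib ** c"
    by (metis assms(6) ib(2) matrix_mul_assoc matrix_mul_lid)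
  have b_ia: "b ** ia = ia ** b"
    by (metis assms(3) ia matrix_mul_assoc matrix_mul_lid matrix_mul_rid)
  have "x ** ib + y ** ia = (x ** a + y ** b) ** ia ** ib"
    by (simp add: matrix_add_rdistrib matrix_mul_assoc[symmetric] ia ib b_ia)
  then have inverse_eq: "x ** ib + y ** ia = ia ** ib"
    using assms(4) by simp
  have "a ** b ** (x ** q + y ** p) = a ** b ** ((x ** ib + y ** ia) ** c)"
    by (simp add: p q matrix_add_ldistrib matrix_add_rdistrib matrix_mul_assoc)
  also have "\<dots> = a ** b ** (ia ** ib) ** c"
    by (simp add: inverse_eq matrix_mul_assoc)
  also have "\<dots> = c"
    by (metis b_ia ia(1) ib(1) matrix_mul_assoc matrix_mul_lid)
  finally show ?thesis ..
qed

lemma common_right_multiple_eq: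
  fixes N1 N2 X Y :: "int^'n^'n" and C P Q :: "int^'m^'n"
  assumes "nonsingular N1" "nonsingular N2" "N1 ** N2 = N2 ** N1" "X ** N1 + Y ** N2 = mat 1"
    and "C = N1 ** P" "C = N2 ** Q"
  shows "C = N1 ** N2 ** (X ** Q + Y ** P)"
proof -
  let ?R = "map_matrix real_of_int"
  have "?R C = ?R N1 ** ?R N2 ** (?R X ** ?R Q + ?R Y ** ?R P)"
  proof (rule invertible_common_right_multiple)
    show "invertible (?R N1)" "invertible (?R N2)"
      using assms(1,2) by (simp_all add: invertible_det_nz det_map_matrix_of_int nonsingular_def)
    show "?R N1 ** ?R N2 = ?R N2 ** ?R N1"
      by (metis assms(3) map_matrix_of_int_mult)
    show "?R X ** ?R N1 + ?R Y ** ?R N2 = mat 1"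
      using arg_cong[OF assms(4), of ?R]
      by (simp add: map_matrix_of_int_mult map_matrix_of_int_add map_matrix_of_int_mat)
    show "?R C = ?R N1 ** ?R P"
      by (simp add: assms(5) map_matrix_of_int_mult)
    show "?R C = ?R N2 ** ?R Q"
      by (simp add: assms(6) map_matrix_of_int_mult)
  qed
  then show ?thesis
    by (simp only: map_matrix_of_int_eq_iff flip: map_matrix_of_int_mult map_matrix_of_int_add)
qed

lemma common_left_multiple_eq:
  fixes N1 N2 X Y :: "int^'n^'n" and C P Q :: "int^'n^'m"
  assumes "nonsingular N1" "nonsingular N2" "N1 ** N2 = N2 ** N1" "N1 ** X + N2 ** Y = mat 1"
    and "C = P ** N1" "C = Q ** N2"
  shows "C = (Q ** X + P ** Y) ** (N1 ** N2)"
proof -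
  have "transpose C = transpose N1 ** transpose N2 **
      (transpose X ** transpose Q + transpose Y ** transpose P)"
  proof (rule common_right_multiple_eq)
    show "nonsingular (transpose N1)" "nonsingular (transpose N2)"
      using assms(1,2) by (simp_all add: nonsingular_def)
    show "transpose N1 ** transpose N2 = transpose N2 ** transpose N1"
      by (metis assms(3) matrix_transpose_mul)
    show "transpose X ** transpose N1 + transpose Y ** transpose N2 = mat 1"
      by (metis assms(4) matrix_transpose_mul transpose_add transpose_mat)
    show "transpose C = transpose N1 ** transpose P" "transpose C = transpose N2 ** transpose Q"
      by (metis assms(5) matrix_transpose_mul) (metis assms(6) matrix_transpose_mul)
  qed
  then have "transpose (transpose C) = transpose (transpose N1 ** transpose N2 **
      (transpose X ** transpose Q + transpose Y ** transpose P))"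
    by (rule arg_cong)
  then have "C = (Q ** X + P ** Y) ** (N2 ** N1)"
    by (simp add: matrix_transpose_mul transpose_add)
  then show ?thesis
    using assms(3) by simp
qed

section \<open>Products of a commuting coprime family\<close>

lemma mat_prod_list_Nil [simp]: "mat_prod_list N [] = mat 1"
  by (simp add: mat_prod_list_def)

lemma mat_prod_list_Cons [simp]: "mat_prod_list N (i # is) = N i ** mat_prod_list N is"
  by (simp add: mat_prod_list_def)

lemma nonsingular_mat_prod_list:
  "(\<And>i. i \<in> set is \<Longrightarrow> nonsingular (N i)) \<Longrightarrow> nonsingular (mat_prod_list N is)"
  by (induction "is") (auto simp: nonsingular_def det_mul)

lemma commute_mat_prod_list:
  "(\<And>i. i \<in> set is \<Longrightarrow> A ** N i = N i ** A) \<Longrightarrow>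
    A ** mat_prod_list N is = mat_prod_list N is ** A"
proof (induction "is")
  case (Cons i "is")
  then have "A ** (N i ** mat_prod_list N is) = N i ** (mat_prod_list N is ** A)"
    by (metis list.set_intros matrix_mul_assoc)
  then show ?case
    by (simp add: matrix_mul_assoc)
qed simp

locale commuting_coprime_family =
  fixes N :: "nat \<Rightarrow> int^'n^'n" and S :: "nat set"
  assumes nonsingular_member: "i \<in> S \<Longrightarrow> nonsingular (N i)"
    and commute_members: "i \<in> S \<Longrightarrow> j \<in> S \<Longrightarrow> i \<noteq> j \<Longrightarrow> N i ** N j = N j ** N i"
    and coprime_members: "i \<in> S \<Longrightarrow> j \<in> S \<Longrightarrow> i \<noteq> j \<Longrightarrow> mat_coprime (N i) (N j)"
begin

lemma commute_mat_prod_list_member: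
  "i \<in> S \<Longrightarrow> set js \<subseteq> S \<Longrightarrow> N i ** mat_prod_list N js = mat_prod_list N js ** N i"
  by (rule commute_mat_prod_list) (metis commute_members subsetD)

lemma mat_prod_lists_commute:
  "set is \<subseteq> S \<Longrightarrow> set js \<subseteq> S \<Longrightarrow>
    mat_prod_list N is ** mat_prod_list N js = mat_prod_list N js ** mat_prod_list N is"
  by (rule commute_mat_prod_list) (metis commute_mat_prod_list_member subsetD)

lemma bezout_member_mat_prod_list:
  assumes "i \<in> S" "set js \<subseteq> S" "i \<notin> set js"
  shows "left_bezout (N i) (mat_prod_list N js) \<and> right_bezout (N i) (mat_prod_list N js)"
  using assms
proof (induction js)
  case Nil
  then show ?case
    by (simp add: left_bezout_one right_bezout_one)
next
  case (Cons j js)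
  then have "left_bezout (N i) (N j) \<and> right_bezout (N i) (N j)" "N i ** N j = N j ** N i"
    using coprime_members nonsingular_member commute_members by (auto simp: mat_coprime_iff_bezout)
  then show ?case
    using Cons commute_mat_prod_list_member[of i js] by (auto intro: left_bezout_mult right_bezout_mult)
qed

lemma bezout_mat_prod_lists:
  assumes "set is \<subseteq> S" "set js \<subseteq> S" "set is \<inter> set js = {}"
  shows "left_bezout (mat_prod_list N is) (mat_prod_list N js) \<and>
    right_bezout (mat_prod_list N is) (mat_prod_list N js)"
  using assms
proof (induction "is")
  case Nil
  then show ?case
    by (simp add: left_bezout_one right_bezout_one left_bezout_sym right_bezout_sym)
next
  case (Cons i "is")
  let ?P = "mat_prod_list N js"
  have "left_bezout ?P (N i) \<and> right_bezout ?P (N i)"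
    using Cons.prems bezout_member_mat_prod_list[of i js] by (auto intro: left_bezout_sym right_bezout_sym)
  moreover have "left_bezout ?P (mat_prod_list N is) \<and> right_bezout ?P (mat_prod_list N is)"
    using Cons by (auto intro: left_bezout_sym right_bezout_sym)
  moreover have "?P ** N i = N i ** ?P" "?P ** mat_prod_list N is = mat_prod_list N is ** ?P"
    using Cons.prems commute_mat_prod_list_member[of i js] mat_prod_lists_commute[of js "is"] by auto
  ultimately show ?case
    by (auto intro: left_bezout_mult right_bezout_mult left_bezout_sym right_bezout_sym)
qed

lemma mat_coprime_mat_prod_lists:
  assumes "set is \<subseteq> S" "set js \<subseteq> S" "set is \<inter> set js = {}"
  shows "mat_coprime (mat_prod_list N is) (mat_prod_list N js)"
proof -
  have "nonsingular (mat_prod_list N is)"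
    using assms(1) nonsingular_member by (intro nonsingular_mat_prod_list) blast
  then show ?thesis
    using bezout_mat_prod_lists[OF assms] by (simp add: mat_coprime_iff_bezout)
qed

lemma mat_prod_list_remove1:
  assumes "i \<in> set is" "set is \<subseteq> S"
  shows "mat_prod_list N is = N i ** mat_prod_list N (remove1 i is)"
    and "mat_prod_list N is = mat_prod_list N (remove1 i is) ** N i"
proof -
  show left: "mat_prod_list N is = N i ** mat_prod_list N (remove1 i is)"
    using assms
  proof (induction "is")
    case (Cons j "is")
    show ?case
    proof (cases "j = i")
      case False
      then have IH: "mat_prod_list N is = N i ** mat_prod_list N (remove1 i is)"
        using Cons by simp
      have "N j ** N i = N i ** N j"
        using Cons.prems False by (intro commute_members) auto
      then have "N j ** mat_prod_list N is = N i ** (N j ** mat_prod_list N (remove1 i is))"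
        by (metis IH matrix_mul_assoc)
      then show ?thesis
        using False by simp
    qed simp
  qed simp
  have "set (remove1 i is) \<subseteq> S"
    using assms(2) set_remove1_subset by fast
  then show "mat_prod_list N is = mat_prod_list N (remove1 i is) ** N i"
    using left assms commute_mat_prod_list_member by auto
qed

lemma mat_prod_list_left_divides_common_right_multiple:
  assumes "distinct is" "set is \<subseteq> S" "\<And>i. i \<in> set is \<Longrightarrow> \<exists>P. C = N i ** P"
  shows "\<exists>A. C = mat_prod_list N is ** A"
  using assms
proof (induction "is")
  case Nil
  then show ?case by simp
next
  case (Cons i "is")
  then obtain A where A: "C = mat_prod_list N is ** A"
    by auto
  obtain P where P: "C = N i ** P"
    using Cons.prems by auto
  obtain X Y where bezout: "X ** N i + Y ** mat_prod_list N is = mat 1"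
    using Cons.prems bezout_member_mat_prod_list[of i "is"] unfolding right_bezout_def by auto
  have "nonsingular (N i)" "nonsingular (mat_prod_list N is)"
    "N i ** mat_prod_list N is = mat_prod_list N is ** N i"
    using Cons.prems nonsingular_member commute_mat_prod_list_member[of i "is"]
    by (auto intro!: nonsingular_mat_prod_list)
  then have "C = N i ** mat_prod_list N is ** (X ** A + Y ** P)"
    using common_right_multiple_eq[OF _ _ _ bezout P A] by blast
  then show ?case
    by (metis mat_prod_list_Cons matrix_mul_assoc)
qed

lemma mat_prod_list_right_divides_common_left_multiple:
  assumes "distinct is" "set is \<subseteq> S" "\<And>i. i \<in> set is \<Longrightarrow> \<exists>P. C = P ** N i"
  shows "\<exists>A. C = A ** mat_prod_list N is"
  using assms
proof (induction "is")
  case Nil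
  then show ?case by simp
next
  case (Cons i "is")
  then obtain A where A: "C = A ** mat_prod_list N is"
    by auto
  obtain P where P: "C = P ** N i"
    using Cons.prems by auto
  obtain X Y where bezout: "N i ** X + mat_prod_list N is ** Y = mat 1"
    using Cons.prems bezout_member_mat_prod_list[of i "is"] unfolding left_bezout_def by auto
  have "nonsingular (N i)" "nonsingular (mat_prod_list N is)"
    "N i ** mat_prod_list N is = mat_prod_list N is ** N i"
    using Cons.prems nonsingular_member commute_mat_prod_list_member[of i "is"]
    by (auto intro!: nonsingular_mat_prod_list)
  then have "C = (A ** X + P ** Y) ** (N i ** mat_prod_list N is)"
    using common_left_multiple_eq[OF _ _ _ bezout P A] by blast
  then show ?case
    by auto
qed

lemma is_lcm_mat_prod_list:
  assumes "distinct is" "set is \<subseteq> S"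
  shows "is_lcm N (set is) (mat_prod_list N is)"
proof -
  have "nonsingular (mat_prod_list N is)"
    using assms(2) nonsingular_member by (intro nonsingular_mat_prod_list) blast
  then have "is_crm N (set is) (mat_prod_list N is)" "is_clm N (set is) (mat_prod_list N is)"
    unfolding is_crm_def is_clm_def using mat_prod_list_remove1[OF _ assms(2)] by blast+
  then show ?thesis
    unfolding is_lcm_def is_lcrm_def is_lclm_def is_crm_def is_clm_def
    using mat_prod_list_left_divides_common_right_multiple[OF assms]
      mat_prod_list_right_divides_common_left_multiple[OF assms]
    by blast
qed

end

theorem lemma2:
  fixes N :: "nat \<Rightarrow> int^'n^'n" and L :: nat
  assumes nonsing: "\<forall>i\<in>{1..L}. nonsingular (N i)"
    and comm: "\<forall>i\<in>{1..L}. \<forall>j\<in>{1..L}. i \<noteq> j \<longrightarrow> N i ** N j = N j ** N i"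
    and cop: "\<forall>i\<in>{1..L}. \<forall>j\<in>{1..L}. i \<noteq> j \<longrightarrow> mat_coprime (N i) (N j)"
  shows "(\<forall>is js. distinct is \<and> distinct js \<and> is \<noteq> [] \<and> js \<noteq> [] \<and>
            set is \<subseteq> {1..L} \<and> set js \<subseteq> {1..L} - set is \<longrightarrow>
            mat_prod_list N is ** mat_prod_list N js = mat_prod_list N js ** mat_prod_list N is \<and>
            mat_coprime (mat_prod_list N is) (mat_prod_list N js))
       \<and> (\<forall>is. distinct is \<and> length is \<ge> 2 \<and> set is \<subseteq> {1..L} \<longrightarrow>
            is_lcm N (set is) (mat_prod_list N is))"
proof -
  interpret commuting_coprime_family N "{1..L}"
    using assms by unfold_locales auto
  show ?thesis
  proof (intro conjI allI impI)
    fix "is" js :: "nat list"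
    assume "distinct is \<and> distinct js \<and> is \<noteq> [] \<and> js \<noteq> [] \<and>
      set is \<subseteq> {1..L} \<and> set js \<subseteq> {1..L} - set is"
    then have "set is \<subseteq> {1..L}" "set js \<subseteq> {1..L}" "set is \<inter> set js = {}"
      by auto
    then show "mat_prod_list N is ** mat_prod_list N js = mat_prod_list N js ** mat_prod_list N is"
      and "mat_coprime (mat_prod_list N is) (mat_prod_list N js)"
      by (simp_all add: mat_prod_lists_commute mat_coprime_mat_prod_lists)
  next
    fix "is" :: "nat list"
    assume "distinct is \<and> length is \<ge> 2 \<and> set is \<subseteq> {1..L}"
    then show "is_lcm N (set is) (mat_prod_list N is)"
      by (simp add: is_lcm_mat_prod_list)
  qed
qed

end
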